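(* Assume $V$ is an $(X^{\rm in},T,\varphi)$-compatible Opt-Lyapunov function for $(X^{\rm in},T)$ with $N'_T(V)>0$, and let $\alpha$ be an $(X^{\rm in},T,\varphi)$-certificate of compatibility for $V$, with $I$ the interval such that $\alpha(I)=[0,1]$ and $\alpha$ strictly increasing continuous on $\operatorname{conv}(I^\varphi\cup I)$. Let $J=\overline{\operatorname{conv}}(I^\varphi\cup I)$, $\overline V=\sup_{x\in X^{\rm in}}V(x)$, and $h(x)=(\alpha|_J)^{-1}(x\overline V)$ for $x\in[0,1]$ (extended arbitrarily to $\mathbb R$). Then $h$ is strictly increasing and continuous on $[0,1]$, $N'_T(V)\in(0,1)$, $\nu_k\le h\big((N'_T(V))^k\big)$ for all $k\in\mathbb N$, and $\{k\in\mathbb N:\nu_k>h(0)\}\neq\emptyset$.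
   Context: Standing data: nonempty $X^{\rm in}\subseteq\mathbb R^d$, $T:\mathbb R^d\to\mathbb R^d$, $\varphi:\mathbb R^d\to\mathbb R$ with $\varphi(0)=0$, $\nu_k=\sup_{x\in X^{\rm in}}\varphi(T^k(x))$ finite for all $k$; $G^{>}_\nu=\{k:\nu_k>\limsup_n\nu_n\}$. An Opt-Lyapunov function for $(X^{\rm in},T)$ is $V:\mathbb R^d\to[0,+\infty]$ with $\sup_{X^{\rm in}}V\in(0,1]$ and $V\circ T\le\lambda V$ for some $\lambda\in(0,1)$. $N'_T(V)=\sup\{V(T(x))/V(x):V(x)\in(0,+\infty)\}$. $I^\varphi=\overline{\operatorname{conv}}\{\varphi(T^k(x)):k\in\mathbb N,x\in X^{\rm in}\}$. $\mathrm{SC}$: functions $\alpha:\mathbb R\to\mathbb R$ with an interval $I$ such that $\alpha(I)=[0,1]$ and $\alpha$ strictly increasing continuous on $\operatorname{conv}(I^\varphi\cup I)$ (such $I$ is unique). A certificate of compatibility for $g$ is $\alpha\in\mathrm{SC}$ with $\alpha(\nu_k)>0$ for some $k\in G^{>}_\nu$ and $\alpha(\varphi(T^k(x)))\le g(T^k(x))$ for all $k,x\in X^{\rm in}$. $g$ is $(X^{\rm in},T,\varphi)$-compatible if for some $k\in G^{>}_\nu$ there are $\varepsilon,\eta>0$ with: $x\in X^{\rm in}$, $j\in\mathbb N$, $\varphi(T^j(x))>\nu_k-\eta$ imply $g(T^j(x))>\varepsilon$. *)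

theory Defs
  imports "HOL-Analysis.Analysis" "HOL-Library.Liminf_Limsup"
begin

text \<open>Ambient space R^d is modelled by a Euclidean space type 'a.
  Functions V : R^d -> [0,+inf] are modelled as 'a => ereal with V >= 0.\<close>

definition nu :: "'a set \<Rightarrow> ('a \<Rightarrow> 'a) \<Rightarrow> ('a \<Rightarrow> real) \<Rightarrow> nat \<Rightarrow> real" where
  "nu X T \<phi> k = (SUP x\<in>X. \<phi> ((T ^^ k) x))"

definition Gsup :: "'a set \<Rightarrow> ('a \<Rightarrow> 'a) \<Rightarrow> ('a \<Rightarrow> real) \<Rightarrow> nat set" where
  "Gsup X T \<phi> = {k. ereal (nu X T \<phi> k) > limsup (\<lambda>n. ereal (nu X T \<phi> n))}"

definition Iphi :: "'a set \<Rightarrow> ('a \<Rightarrow> 'a) \<Rightarrow> ('a \<Rightarrow> real) \<Rightarrow> real set" where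
  "Iphi X T \<phi> = closure (convex hull {\<phi> ((T ^^ k) x) | k x. x \<in> X})"

definition opt_lyapunov :: "'a set \<Rightarrow> ('a \<Rightarrow> 'a) \<Rightarrow> ('a \<Rightarrow> ereal) \<Rightarrow> bool" where
  "opt_lyapunov X T V \<longleftrightarrow> (\<forall>x. 0 \<le> V x) \<and>
     (SUP x\<in>X. V x) \<in> {0<..1} \<and>
     (\<exists>lam::real. 0 < lam \<and> lam < 1 \<and> (\<forall>x. V (T x) \<le> ereal lam * V x))"

definition Nprime :: "('a \<Rightarrow> 'a) \<Rightarrow> ('a \<Rightarrow> ereal) \<Rightarrow> ereal" where
  "Nprime T V = Sup {V (T x) / V x | x. 0 < V x \<and> V x < \<infinity>}"

definition SC_with :: "'a set \<Rightarrow> ('a \<Rightarrow> 'a) \<Rightarrow> ('a \<Rightarrow> real) \<Rightarrow> (real \<Rightarrow> real) \<Rightarrow> real set \<Rightarrow> bool" where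
  "SC_with X T \<phi> \<alpha> I \<longleftrightarrow> is_interval I \<and> \<alpha> ` I = {0..1} \<and>
     strict_mono_on (convex hull (Iphi X T \<phi> \<union> I)) \<alpha> \<and>
     continuous_on (convex hull (Iphi X T \<phi> \<union> I)) \<alpha>"

definition SC :: "'a set \<Rightarrow> ('a \<Rightarrow> 'a) \<Rightarrow> ('a \<Rightarrow> real) \<Rightarrow> (real \<Rightarrow> real) \<Rightarrow> bool" where
  "SC X T \<phi> \<alpha> \<longleftrightarrow> (\<exists>I. SC_with X T \<phi> \<alpha> I)"

definition certificate :: "'a set \<Rightarrow> ('a \<Rightarrow> 'a) \<Rightarrow> ('a \<Rightarrow> real) \<Rightarrow> ('a \<Rightarrow> ereal) \<Rightarrow> (real \<Rightarrow> real) \<Rightarrow> bool" where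
  "certificate X T \<phi> g \<alpha> \<longleftrightarrow> SC X T \<phi> \<alpha> \<and>
     (\<exists>k\<in>Gsup X T \<phi>. \<alpha> (nu X T \<phi> k) > 0) \<and>
     (\<forall>k. \<forall>x\<in>X. ereal (\<alpha> (\<phi> ((T ^^ k) x))) \<le> g ((T ^^ k) x))"

definition compatible :: "'a set \<Rightarrow> ('a \<Rightarrow> 'a) \<Rightarrow> ('a \<Rightarrow> real) \<Rightarrow> ('a \<Rightarrow> ereal) \<Rightarrow> bool" where
  "compatible X T \<phi> g \<longleftrightarrow> (\<exists>k\<in>Gsup X T \<phi>. \<exists>\<epsilon>>0. \<exists>\<eta>>0.
     \<forall>x\<in>X. \<forall>j. \<phi> ((T ^^ j) x) > nu X T \<phi> k - \<eta> \<longrightarrow> g ((T ^^ j) x) > ereal \<epsilon>)"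

end

theory Submission
  imports Defs
begin

text \<open>Applying the certificate \<open>\<alpha>\<close> along an orbit turns the Lyapunov decay
  \<open>V (T\<^sup>k x) \<le> N'\<^sub>T(V)\<^sup>k \<cdot> sup V\<close> into \<open>\<alpha> (\<phi> (T\<^sup>k x)) \<le> N'\<^sub>T(V)\<^sup>k \<cdot> sup V\<close>;
  since \<open>\<alpha>\<close> is strictly increasing on a closed interval containing all values of \<open>\<phi>\<close>
  along orbits and all \<open>\<nu>\<^sub>k\<close>, this inverts to \<open>\<nu>\<^sub>k \<le> h (N'\<^sub>T(V)\<^sup>k)\<close>.  The index
  \<open>k\<close> with \<open>\<alpha> (\<nu>\<^sub>k) > 0 = \<alpha> (h 0)\<close> supplied by the certificate gives \<open>\<nu>\<^sub>k > h 0\<close>.\<close>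

lemma closed_convex_hull_real:
  fixes U :: "real set"
  assumes "closed U"
  shows "closed (convex hull U)"
proof -
  let ?H = "convex hull U"
  have "z \<in> ?H" if z: "z \<in> closure ?H" for z
  proof -
    have ne: "U \<noteq> {}" using z by auto
    have "\<exists>p\<in>U. p \<le> z"
    proof (rule ccontr)
      assume "\<not> (\<exists>p\<in>U. p \<le> z)"
      then have gt: "\<forall>p\<in>U. z < p" by auto
      then have bdd: "bdd_below U" by (meson bdd_below.I less_imp_le)
      have "?H \<subseteq> {Inf U..}"
        by (rule hull_minimal) (auto intro: cInf_lower[OF _ bdd] simp: convex_real_interval)
      then have "Inf U \<le> z" using z closure_minimal[of ?H "{Inf U..}"] by auto
      with gt closed_contains_Inf[OF ne bdd \<open>closed U\<close>] show False by force
    qed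
    moreover have "\<exists>q\<in>U. z \<le> q"
    proof (rule ccontr)
      assume "\<not> (\<exists>q\<in>U. z \<le> q)"
      then have lt: "\<forall>q\<in>U. q < z" by auto
      then have bdd: "bdd_above U" by (meson bdd_above.I less_imp_le)
      have "?H \<subseteq> {..Sup U}"
        by (rule hull_minimal) (auto intro: cSup_upper[OF _ bdd] simp: convex_real_interval)
      then have "z \<le> Sup U" using z closure_minimal[of ?H "{..Sup U}"] by auto
      with lt closed_contains_Sup[OF ne bdd \<open>closed U\<close>] show False by force
    qed
    moreover have "is_interval ?H" by (simp add: is_interval_convex_1)
    ultimately show ?thesis by (meson hull_subset mem_is_interval_1_I subsetD)
  qed
  then show ?thesis by (meson closure_subset_eq subsetI)
qed

lemma compact_if_strict_mono_on_image_Icc: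
  fixes \<alpha> :: "real \<Rightarrow> real"
  assumes "is_interval I" "strict_mono_on I \<alpha>" "\<alpha> ` I = {c..d}" "c \<le> d"
  shows "compact I"
proof -
  have "c \<in> \<alpha> ` I" "d \<in> \<alpha> ` I" unfolding assms(3) using assms(4) by auto
  then obtain a b where ab: "a \<in> I" "c = \<alpha> a" "b \<in> I" "d = \<alpha> b" by (meson imageE)
  have "I = {a..b}"
  proof
    show "I \<subseteq> {a..b}"
    proof
      fix x assume x: "x \<in> I"
      then have "\<alpha> a \<le> \<alpha> x" "\<alpha> x \<le> \<alpha> b" using assms(3) ab by auto
      then show "x \<in> {a..b}"
        using strict_mono_on_less_eq[OF assms(2) ab(1) x] strict_mono_on_less_eq[OF assms(2) x ab(3)]
        by simp
    qed
    show "{a..b} \<subseteq> I" using mem_is_interval_1_I[OF assms(1) ab(1,3)] by auto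
  qed
  then show ?thesis by simp
qed

lemma the_inv_into_scaled_mem:
  fixes \<alpha> :: "real \<Rightarrow> real"
  assumes "strict_mono_on J \<alpha>" "I \<subseteq> J" "\<alpha> ` I = {0..1}" "0 \<le> c" "c \<le> 1" "y \<in> {0..1}"
  shows "the_inv_into J \<alpha> (y * c) \<in> I \<and> \<alpha> (the_inv_into J \<alpha> (y * c)) = y * c"
proof -
  have "y * c \<in> \<alpha> ` I" unfolding assms(3) using assms(4-6) by (auto simp: mult_le_one)
  then obtain t where t: "t \<in> I" "y * c = \<alpha> t" by (rule imageE)
  then have "the_inv_into J \<alpha> (y * c) = t"
    using the_inv_into_f_f[OF strict_mono_on_imp_inj_on[OF assms(1)]] assms(2) by auto
  with t show ?thesis by simp
qed

lemma strict_mono_on_scaled_inverse: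
  fixes \<alpha> g :: "real \<Rightarrow> real"
  assumes "strict_mono_on J \<alpha>" "I \<subseteq> J" "\<alpha> ` I = {0..1}" "0 < c" "c \<le> 1"
    and g: "\<And>y. y \<in> {0..1} \<Longrightarrow> g y = the_inv_into J \<alpha> (y * c)"
  shows "strict_mono_on {0..1} g"
proof (rule strict_mono_onI)
  fix r s :: real assume rs: "r \<in> {0..1}" "s \<in> {0..1}" "r < s"
  note mem = the_inv_into_scaled_mem[OF assms(1-3) less_imp_le[OF assms(4)] assms(5)]
  have "\<alpha> (g r) < \<alpha> (g s)" using mem[of r] mem[of s] g rs assms(4) by simp
  moreover have "g r \<in> J" "g s \<in> J" using mem[of r] mem[of s] g rs assms(2) by auto
  ultimately show "g r < g s" using strict_mono_on_less[OF assms(1)] by blast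
qed

lemma continuous_on_scaled_inverse:
  fixes \<alpha> g :: "real \<Rightarrow> real"
  assumes "strict_mono_on J \<alpha>" "continuous_on J \<alpha>" "I \<subseteq> J" "compact I" "\<alpha> ` I = {0..1}"
    and "0 \<le> c" "c \<le> 1"
    and g: "\<And>y. y \<in> {0..1} \<Longrightarrow> g y = the_inv_into J \<alpha> (y * c)"
  shows "continuous_on {0..1} g"
proof -
  have inj: "inj_on \<alpha> I" using strict_mono_on_imp_inj_on[OF assms(1)] assms(3) by (rule inj_on_subset)
  have "continuous_on {0..1} (the_inv_into I \<alpha>)"
    using continuous_on_inv_into[OF continuous_on_subset[OF assms(2,3)] assms(4) inj] assms(5)
    by simp
  then have "continuous_on {0..1} (\<lambda>y. the_inv_into I \<alpha> (y * c))"
    by (rule continuous_on_compose2) (use assms(6,7) in \<open>auto intro!: continuous_intros simp: mult_le_one\<close>)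
  moreover have "the_inv_into I \<alpha> (y * c) = g y" if "y \<in> {0..1}" for y
    using the_inv_into_scaled_mem[OF assms(1,3,5-7) that] g[OF that] inj
    by (metis the_inv_into_f_f)
  ultimately show ?thesis by (rule continuous_on_eq)
qed

lemma Nprime_le_rate:
  assumes "\<And>x. 0 \<le> V x" "\<And>x. V (T x) \<le> ereal lam * V x"
  shows "Nprime T V \<le> ereal lam"
  unfolding Nprime_def
proof (rule Sup_least, clarify)
  fix x assume "0 < V x" "V x < \<infinity>"
  then obtain v where v: "V x = ereal v" "0 < v" by (cases "V x") auto
  then have le: "V (T x) \<le> ereal (lam * v)" using assms(2)[of x] by simp
  then obtain w where w: "V (T x) = ereal w" using assms(1)[of "T x"] by (cases "V (T x)") auto
  then have "w / v \<le> lam" using le v by (simp add: divide_le_eq)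
  then show "V (T x) / V x \<le> ereal lam" using v w by simp
qed

lemma opt_lyapunov_Nprime_less_one:
  assumes "opt_lyapunov X T V"
  shows "Nprime T V < 1"
proof -
  obtain lam where "lam < 1" "\<And>x. 0 \<le> V x" "\<And>x. V (T x) \<le> ereal lam * V x"
    using assms unfolding opt_lyapunov_def by blast
  then have "Nprime T V \<le> ereal lam" "ereal lam < 1" by (auto intro: Nprime_le_rate)
  then show ?thesis by (rule order_le_less_trans)
qed

lemma opt_lyapunov_Nprime_step:
  assumes "opt_lyapunov X T V" "Nprime T V = ereal n" "V x = ereal v"
  shows "V (T x) \<le> ereal (n * v)"
proof -
  obtain lam where lam: "V (T x) \<le> ereal lam * V x" and nonneg: "\<And>x. 0 \<le> V x"
    using assms(1) unfolding opt_lyapunov_def by blast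
  show ?thesis
  proof (cases "v = 0")
    case True
    then show ?thesis using lam assms(3) by simp
  next
    case False
    then have v: "0 < v" using nonneg[of x] assms(3) by simp
    obtain w where w: "V (T x) = ereal w"
      using lam nonneg[of "T x"] assms(3) by (cases "V (T x)") auto
    have "ereal (w / v) \<le> Nprime T V"
      unfolding Nprime_def using w v assms(3) by (intro Sup_upper) (auto intro!: exI[of _ x])
    then have "w \<le> n * v" using v assms(2) by (simp add: divide_le_eq mult.commute)
    then show ?thesis using w by simp
  qed
qed

lemma opt_lyapunov_iterate_le:
  assumes "opt_lyapunov X T V" "Nprime T V = ereal n" "0 \<le> n" "x \<in> X"
  shows "V ((T ^^ k) x) \<le> ereal (n ^ k * real_of_ereal (SUP x\<in>X. V x))"
proof (induction k)
  case 0
  have "(SUP x\<in>X. V x) \<in> {0<..1}" using assms(1) unfolding opt_lyapunov_def by blast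
  moreover have "V x \<le> (SUP x\<in>X. V x)" using assms(4) by (rule SUP_upper)
  ultimately show ?case by (cases "SUP x\<in>X. V x") auto
next
  case (Suc k)
  obtain w where w: "V ((T ^^ k) x) = ereal w"
    using Suc assms(1) unfolding opt_lyapunov_def by (cases "V ((T ^^ k) x)") auto
  have "V ((T ^^ Suc k) x) \<le> ereal (n * w)"
    using opt_lyapunov_Nprime_step[OF assms(1,2) w] by simp
  also have "\<dots> \<le> ereal (n ^ Suc k * real_of_ereal (SUP x\<in>X. V x))"
    using Suc w assms(3) by (simp add: mult_left_mono mult.assoc)
  finally show ?case .
qed

lemma orbit_mem_Iphi: "x \<in> X \<Longrightarrow> \<phi> ((T ^^ k) x) \<in> Iphi X T \<phi>"
  unfolding Iphi_def by (auto intro!: closure_subset[THEN subsetD] hull_subset[THEN subsetD])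

lemma nu_mem_Iphi:
  assumes "X \<noteq> {}" "bdd_above ((\<lambda>x. \<phi> ((T ^^ k) x)) ` X)"
  shows "nu X T \<phi> k \<in> Iphi X T \<phi>"
proof -
  let ?S = "(\<lambda>x. \<phi> ((T ^^ k) x)) ` X"
  have "Sup ?S \<in> closure ?S" using assms by (intro closure_contains_Sup) auto
  moreover have "closure ?S \<subseteq> Iphi X T \<phi>"
    using orbit_mem_Iphi by (intro closure_minimal) (auto simp: Iphi_def)
  ultimately show ?thesis unfolding nu_def by auto
qed

lemma nu_le_if_strict_mono_bound:
  fixes \<alpha> :: "real \<Rightarrow> real"
  assumes "strict_mono_on J \<alpha>" "Iphi X T \<phi> \<subseteq> J" "t \<in> J" "X \<noteq> {}"
    and "\<And>x. x \<in> X \<Longrightarrow> \<alpha> (\<phi> ((T ^^ k) x)) \<le> \<alpha> t"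
  shows "nu X T \<phi> k \<le> t"
  unfolding nu_def
proof (rule cSUP_least[OF assms(4)])
  fix x assume x: "x \<in> X"
  have "\<phi> ((T ^^ k) x) \<in> J" using assms(2) orbit_mem_Iphi[OF x] by (rule subsetD)
  then show "\<phi> ((T ^^ k) x) \<le> t"
    using assms(5)[OF x] strict_mono_on_less_eq[OF assms(1) _ assms(3)] by simp
qed

theorem mainTheorem18:
  fixes X :: "'a::euclidean_space set" and T :: "'a \<Rightarrow> 'a" and \<phi> :: "'a \<Rightarrow> real"
    and V :: "'a \<Rightarrow> ereal" and \<alpha> :: "real \<Rightarrow> real" and I :: "real set"
    and h :: "real \<Rightarrow> real"
  assumes X_ne: "X \<noteq> {}"
    and phi0: "\<phi> 0 = 0"
    and nu_fin: "\<And>k. bdd_above ((\<lambda>x. \<phi> ((T ^^ k) x)) ` X)"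
    and lyap: "opt_lyapunov X T V"
    and compat: "compatible X T \<phi> V"
    and Npos: "Nprime T V > 0"
    and cert: "certificate X T \<phi> V \<alpha>"
    and I: "SC_with X T \<phi> \<alpha> I"
    and h_def: "\<And>y. y \<in> {0..1} \<Longrightarrow>
        h y = the_inv_into (closure (convex hull (Iphi X T \<phi> \<union> I))) \<alpha>
                (y * real_of_ereal (SUP x\<in>X. V x))"
  shows "strict_mono_on {0..1} h \<and> continuous_on {0..1} h
    \<and> 0 < Nprime T V \<and> Nprime T V < 1
    \<and> (\<forall>k. nu X T \<phi> k \<le> h (real_of_ereal (Nprime T V) ^ k))
    \<and> {k. nu X T \<phi> k > h 0} \<noteq> {}"
proof -
  define J where "J = convex hull (Iphi X T \<phi> \<union> I)"
  define v where "v = real_of_ereal (SUP x\<in>X. V x)"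
  have I_interval: "is_interval I" and \<alpha>I: "\<alpha> ` I = {0..1}"
    and mono: "strict_mono_on J \<alpha>" and cont: "continuous_on J \<alpha>"
    using I unfolding SC_with_def J_def by auto
  have sub: "I \<subseteq> J" "Iphi X T \<phi> \<subseteq> J" unfolding J_def by (auto intro: hull_subset[THEN subsetD])
  have "compact I"
    by (rule compact_if_strict_mono_on_image_Icc[OF I_interval monotone_on_subset[OF mono sub(1)] \<alpha>I])
      simp
  then have "closed J"
    unfolding J_def Iphi_def
    by (intro closed_convex_hull_real closed_Un closed_closure compact_imp_closed)
  then have h: "h y = the_inv_into J \<alpha> (y * v)" if "y \<in> {0..1}" for y
    using h_def[OF that] unfolding J_def v_def by simp
  have v: "0 < v" "v \<le> 1"
    using lyap unfolding opt_lyapunov_def v_def by (cases "SUP x\<in>X. V x"; auto)+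
  have h_mem: "h y \<in> I \<and> \<alpha> (h y) = y * v" if "y \<in> {0..1}" for y
    using the_inv_into_scaled_mem[OF mono sub(1) \<alpha>I _ v(2) that] v h[OF that] by simp
  obtain n where n: "Nprime T V = ereal n" "0 < n" "n < 1"
    using Npos opt_lyapunov_Nprime_less_one[OF lyap] by (cases "Nprime T V") auto
  have "nu X T \<phi> k \<le> h (n ^ k)" for k
  proof (rule nu_le_if_strict_mono_bound[OF mono sub(2) _ X_ne])
    have nk: "n ^ k \<in> {0..1}" using n by (simp add: power_le_one)
    then show "h (n ^ k) \<in> J" using h_mem sub by blast
    fix x assume x: "x \<in> X"
    have "ereal (\<alpha> (\<phi> ((T ^^ k) x))) \<le> V ((T ^^ k) x)"
      using cert x unfolding certificate_def by blast
    also have "\<dots> \<le> ereal (n ^ k * v)"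
      using opt_lyapunov_iterate_le[OF lyap n(1) _ x] n(2) unfolding v_def by simp
    finally show "\<alpha> (\<phi> ((T ^^ k) x)) \<le> \<alpha> (h (n ^ k))" using h_mem[OF nk] by simp
  qed
  moreover obtain k where "\<alpha> (h 0) < \<alpha> (nu X T \<phi> k)"
    using cert h_mem[of 0] unfolding certificate_def by auto
  moreover have "h 0 \<in> J" "nu X T \<phi> k \<in> J"
    using h_mem[of 0] nu_mem_Iphi[OF X_ne nu_fin] sub by auto
  ultimately show ?thesis
    using strict_mono_on_less[OF mono] strict_mono_on_scaled_inverse[OF mono sub(1) \<alpha>I v h]
      continuous_on_scaled_inverse[OF mono cont sub(1) \<open>compact I\<close> \<alpha>I less_imp_le[OF v(1)] v(2) h]
      Npos n by auto
qed

end
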